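(* Let $k$ be a positive integer, $a=3k+2$, $S=\{a,a+1,a+2\}$, $G=\langle S\rangle$, $t=\lfloor 3k/2\rfloor$, $I_{i,k}=[ia,\,ia+2i]$ for $i\in[0,t+1]$, and $H_{7,k}=\bigcup_{i=0}^{t}I_{i,k}\cup[(t+1)a,\infty[$. Then: (1) $G=H_{7,k}$; (2) $I_{i,k}<I_{i+1,k}$ for every $i\in[0,t]$, and $I_{t,k}<[(t+1)a,\infty[$; (3) $H_{7,k}$ is a $3$-permutation numerical semigroup.
   Context: $\mathbb{N}=\{0,1,2,\dots\}$. A numerical semigroup is a submonoid $G$ of $(\mathbb{N},+,0)$ with $\mathbb{N}\setminus G$ finite; $\langle S\rangle$ is the submonoid generated by $S$. Writing the elements of a numerical semigroup as $0=g_0<g_1<g_2<\cdots$, it is an $n$-permutation numerical semigroup if it is generated by $\{g_1,\dots,g_n\}$ and for every $k\in\mathbb{N}$ the tuple $(g_{kn+1}\bmod n,\dots,g_{kn+n}\bmod n)$ contains exactly one representative of each residue class mod $n$. Notation: $[u,v]=\{x\in\mathbb{N}:u\le x\le v\}$, $[u,\infty[=\{x\in\mathbb{N}:x\ge u\}$; for nonempty $X,Y\subseteq\mathbb{N}$, $X<Y$ means $x<y$ for all $x\in X,y\in Y$. *)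

theory Defs
  imports Main "HOL-Library.Infinite_Set"
begin

inductive_set gen_monoid :: "nat set \<Rightarrow> nat set" for S :: "nat set" where
  zero: "0 \<in> gen_monoid S"
| add: "x \<in> gen_monoid S \<Longrightarrow> s \<in> S \<Longrightarrow> x + s \<in> gen_monoid S"

definition submonoid_nat :: "nat set \<Rightarrow> bool" where
  "submonoid_nat G \<longleftrightarrow> 0 \<in> G \<and> (\<forall>x\<in>G. \<forall>y\<in>G. x + y \<in> G)"

definition numerical_semigroup :: "nat set \<Rightarrow> bool" where
  "numerical_semigroup G \<longleftrightarrow> submonoid_nat G \<and> finite (UNIV - G)"

text \<open>The i-th element (0-indexed, increasing) of G: g_i = enumerate G i.\<close>
definition perm_numerical_semigroup :: "nat \<Rightarrow> nat set \<Rightarrow> bool" where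
  "perm_numerical_semigroup n G \<longleftrightarrow>
     numerical_semigroup G \<and>
     G = gen_monoid {enumerate G i | i. 1 \<le> i \<and> i \<le> n} \<and>
     (\<forall>k::nat. bij_betw (\<lambda>j. enumerate G (k * n + j) mod n) {1..n} {..<n})"

definition set_less :: "nat set \<Rightarrow> nat set \<Rightarrow> bool" where
  "set_less X Y \<longleftrightarrow> (\<forall>x\<in>X. \<forall>y\<in>Y. x < y)"

end

theory Submission
  imports Defs "HOL-Library.Discrete_Functions"
begin

text \<open>A sum of \<open>i\<close> generators from \<open>{a, a+1, a+2}\<close> fills exactly the interval
  \<open>[i a, i a + 2 i]\<close>, so the semigroup is a union of such intervals; once \<open>2 i + 1 \<ge> a\<close> they
  overlap and everything from \<open>(t+1) a\<close> on is covered. Since the \<open>i\<close>-th interval has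
  \<open>2 i + 1\<close> elements, the first \<open>i\<close> of them have \<open>i\<^sup>2\<close> elements in total, so the
  \<open>n\<close>-th element of the semigroup is \<open>i a + (n - i\<^sup>2)\<close> with \<open>i = \<lfloor>\<surd>n\<rfloor>\<close> (with \<open>i\<close> capped at \<open>t + 1\<close> in the tail).
  Consecutive elements differ by 1 except at the jump from \<open>i a + 2 i\<close> to \<open>(i+1) a\<close>, which
  happens right before the index \<open>(i+1)\<^sup>2\<close>. This index is \<open>\<equiv> 1 (mod 3)\<close>, i.e. the jump lies
  between two blocks of three, unless \<open>i \<equiv> 2 (mod 3)\<close>; in that case the jump
  \<open>a - 2 i \<equiv> 1 (mod 3)\<close> does not disturb the residues either.\<close>

lemma gen_monoid_add:
  assumes "x \<in> gen_monoid S" "y \<in> gen_monoid S"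
  shows "x + y \<in> gen_monoid S"
  using assms(2)
proof (induction y rule: gen_monoid.induct)
  case (add y s)
  then show ?case
    using gen_monoid.add[of "x + y" S s] by (simp add: add.assoc)
qed (use assms(1) in simp)

lemma submonoid_nat_gen_monoid: "submonoid_nat (gen_monoid S)"
  unfolding submonoid_nat_def by (blast intro: gen_monoid.zero gen_monoid_add)

lemma mem_gen_monoid_consecutive_iff:
  "x \<in> gen_monoid {a, a + 1, a + 2} \<longleftrightarrow> (\<exists>i. i * a \<le> x \<and> x \<le> i * a + 2 * i)"
proof
  assume "x \<in> gen_monoid {a, a + 1, a + 2}"
  then show "\<exists>i. i * a \<le> x \<and> x \<le> i * a + 2 * i"
  proof (induction x rule: gen_monoid.induct)
    case (add x s)
    then obtain i where "i * a \<le> x" "x \<le> i * a + 2 * i" by blast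
    with add.hyps(2) have "Suc i * a \<le> x + s" "x + s \<le> Suc i * a + 2 * Suc i" by auto
    then show ?case by blast
  qed auto
next
  have interval_sub: "i * a + d \<in> gen_monoid {a, a + 1, a + 2}" if "d \<le> 2 * i" for i d
    using that
  proof (induction i arbitrary: d)
    case 0
    then show ?case by (simp add: gen_monoid.zero)
  next
    case (Suc i)
    obtain e s where "e \<le> 2 * i" "s \<in> {a, a + 1, a + 2}" "Suc i * a + d = (i * a + e) + s"
    proof (cases "d \<le> 2 * i")
      case True
      then show ?thesis by (intro that[of d a]) auto
    next
      case False
      with Suc.prems show ?thesis by (intro that[of "2 * i" "a + (d - 2 * i)"]) auto
    qed
    then show ?case using Suc.IH gen_monoid.add by metis
  qed
  assume "\<exists>i. i * a \<le> x \<and> x \<le> i * a + 2 * i"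
  then obtain i where "i * a \<le> x" "x \<le> i * a + 2 * i" by blast
  then show "x \<in> gen_monoid {a, a + 1, a + 2}"
    using interval_sub[of "x - i * a" i] by simp
qed

definition staircase :: "nat \<Rightarrow> nat \<Rightarrow> nat set" where
  "staircase a t = (\<Union>i\<in>{0..t}. {i * a .. i * a + 2 * i}) \<union> {(t + 1) * a ..}"

lemma mem_staircase_iff:
  "x \<in> staircase a t \<longleftrightarrow> (\<exists>i\<le>t. i * a \<le> x \<and> x \<le> i * a + 2 * i) \<or> (t + 1) * a \<le> x"
  unfolding staircase_def by auto

lemma gen_monoid_consecutive_eq_staircase:
  assumes "a \<le> 2 * t + 3"
  shows "gen_monoid {a, a + 1, a + 2} = staircase a t"
proof (intro set_eqI iffI)
  fix x
  assume "x \<in> gen_monoid {a, a + 1, a + 2}"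
  then obtain i where i: "i * a \<le> x" "x \<le> i * a + 2 * i"
    unfolding mem_gen_monoid_consecutive_iff by blast
  show "x \<in> staircase a t"
  proof (cases "i \<le> t")
    case False
    then have "(t + 1) * a \<le> i * a" by (intro mult_le_mono1) simp
    with i show ?thesis unfolding mem_staircase_iff by linarith
  qed (use i in \<open>auto simp: mem_staircase_iff\<close>)
next
  fix x
  assume "x \<in> staircase a t"
  then consider i where "i \<le> t" "i * a \<le> x" "x \<le> i * a + 2 * i"
    | "a = 0" | "0 < a" "(t + 1) * a \<le> x"
    unfolding mem_staircase_iff by auto
  then have "\<exists>i. i * a \<le> x \<and> x \<le> i * a + 2 * i"
  proof cases
    case 2
    then show ?thesis by (intro exI[of _ x]) simp
  next
    case 3
    then have "t + 1 \<le> x div a" by (simp add: less_eq_div_iff_mult_less_eq)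
    moreover have "x mod a < a" using \<open>0 < a\<close> by simp
    ultimately have "x mod a \<le> 2 * (x div a)" using assms by linarith
    then show ?thesis
      using div_mult_mod_eq[of x a] by (intro exI[of _ "x div a"]) linarith
  qed blast
  then show "x \<in> gen_monoid {a, a + 1, a + 2}"
    unfolding mem_gen_monoid_consecutive_iff .
qed

lemma staircase_step_less:
  fixes a t i :: nat
  assumes "2 * t < a" "i \<le> t"
  shows "i * a + 2 * i < (i + 1) * a"
proof -
  have "2 * i < a" using assms by linarith
  then show ?thesis by simp
qed

lemma finite_compl_staircase: "finite (UNIV - staircase a t)"
proof (rule finite_subset)
  show "UNIV - staircase a t \<subseteq> {..<(t + 1) * a}"
  proof
    fix x
    assume "x \<in> UNIV - staircase a t"
    then have "\<not> (t + 1) * a \<le> x" using mem_staircase_iff by blast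
    then show "x \<in> {..<(t + 1) * a}" by simp
  qed
qed simp

lemma enumerate_eq_strict_mono:
  fixes f :: "nat \<Rightarrow> nat"
  assumes "strict_mono f" "range f = S"
  shows "enumerate S n = f n"
proof (induction n)
  case 0
  have "(LEAST s. s \<in> S) = f 0"
    using assms by (intro Least_equality) (auto simp: strict_mono_less_eq)
  then show ?case by (simp add: enumerate_0)
next
  case (Suc n)
  have "infinite S"
    using assms strict_mono_imp_inj_on range_inj_infinite by blast
  moreover have "(LEAST s. s \<in> S \<and> f n < s) = f (Suc n)"
    using assms
    by (intro Least_equality) (auto simp: strict_mono_less strict_mono_less_eq Suc_le_eq)
  ultimately show ?case using Suc.IH by (simp add: enumerate_Suc'')
qed

definition staircase_enum :: "nat \<Rightarrow> nat \<Rightarrow> nat \<Rightarrow> nat" where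
  "staircase_enum a t n = (let i = min (floor_sqrt n) (t + 1) in i * a + (n - i\<^sup>2))"

lemma staircase_enum_square_plus:
  assumes "i \<le> t" "d \<le> 2 * i"
  shows "staircase_enum a t (i\<^sup>2 + d) = i * a + d"
proof -
  have "floor_sqrt (i\<^sup>2 + d) = i"
    using assms(2) by (intro floor_sqrt_unique) (auto simp: power2_eq_square)
  with assms(1) show ?thesis unfolding staircase_enum_def by simp
qed

lemma staircase_enum_tail: "staircase_enum a t ((t + 1)\<^sup>2 + d) = (t + 1) * a + d"
proof -
  have "t + 1 \<le> floor_sqrt ((t + 1)\<^sup>2 + d)"
    by (simp add: le_floor_sqrtI)
  then show ?thesis unfolding staircase_enum_def by (simp add: min_absorb2)
qed

lemma square_plus_cases:
  fixes n t :: nat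
  obtains (interval) i d where "n = i\<^sup>2 + d" "i \<le> t" "d \<le> 2 * i"
    | (tail) d where "n = (t + 1)\<^sup>2 + d"
proof (cases "floor_sqrt n \<le> t")
  case True
  have "n < (Suc (floor_sqrt n))\<^sup>2" by (rule Suc_floor_sqrt_power2_gt)
  then have "n - (floor_sqrt n)\<^sup>2 \<le> 2 * floor_sqrt n" by (simp add: power2_eq_square)
  with True show ?thesis
    using interval[of "floor_sqrt n" "n - (floor_sqrt n)\<^sup>2"] by simp
next
  case False
  then have "(t + 1)\<^sup>2 \<le> n" using le_floor_sqrt_iff[of "t + 1" n] by simp
  then show ?thesis using tail[of "n - (t + 1)\<^sup>2"] by simp
qed

lemma staircase_enum_Suc:
  "staircase_enum a t (Suc n) = Suc (staircase_enum a t n) \<or>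
   (\<exists>i\<le>t. Suc n = (Suc i)\<^sup>2 \<and> staircase_enum a t n = i * a + 2 * i \<and>
      staircase_enum a t (Suc n) = Suc i * a)"
proof (cases n t rule: square_plus_cases)
  case (interval i d)
  show ?thesis
  proof (cases "d < 2 * i")
    case True
    then show ?thesis
      using interval staircase_enum_square_plus[of i t "Suc d" a]
        staircase_enum_square_plus[of i t d a] by simp
  next
    case False
    with interval have d: "d = 2 * i" "Suc n = (Suc i)\<^sup>2" by (auto simp: power2_eq_square)
    have "staircase_enum a t (Suc n) = Suc i * a"
    proof (cases "Suc i \<le> t")
      case True
      then show ?thesis using d staircase_enum_square_plus[of "Suc i" t 0 a] by simp
    next
      case False
      with interval have "Suc i = t + 1" by simp
      then show ?thesis using d staircase_enum_tail[of a t 0] by simp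
    qed
    then show ?thesis
      using interval d staircase_enum_square_plus[of i t d a] by auto
  qed
next
  case (tail d)
  then show ?thesis
    using staircase_enum_tail[of a t d] staircase_enum_tail[of a t "Suc d"] by simp
qed

lemma strict_mono_staircase_enum:
  assumes "2 * t < a"
  shows "strict_mono (staircase_enum a t)"
proof (rule strict_mono_Suc_iff[THEN iffD2], intro allI)
  fix n
  from staircase_enum_Suc[of a t n] assms
  show "staircase_enum a t n < staircase_enum a t (Suc n)" by auto
qed

lemma range_staircase_enum: "range (staircase_enum a t) = staircase a t"
proof (intro set_eqI iffI)
  fix x
  assume "x \<in> range (staircase_enum a t)"
  then obtain n where x: "x = staircase_enum a t n" by blast
  then show "x \<in> staircase a t"
  proof (cases n t rule: square_plus_cases)
    case (interval i d)
    then have "x = i * a + d" using x staircase_enum_square_plus by simp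
    with interval show ?thesis unfolding mem_staircase_iff by auto
  next
    case (tail d)
    then show ?thesis using x staircase_enum_tail[of a t d] by (simp add: mem_staircase_iff)
  qed
next
  fix x
  assume "x \<in> staircase a t"
  then consider i where "i \<le> t" "i * a \<le> x" "x \<le> i * a + 2 * i" | "(t + 1) * a \<le> x"
    unfolding mem_staircase_iff by blast
  then show "x \<in> range (staircase_enum a t)"
  proof cases
    case 1
    then have "staircase_enum a t (i\<^sup>2 + (x - i * a)) = x"
      using staircase_enum_square_plus[of i t "x - i * a" a] by simp
    then show ?thesis by (metis rangeI)
  next
    case 2
    then have "staircase_enum a t ((t + 1)\<^sup>2 + (x - (t + 1) * a)) = x"
      using staircase_enum_tail[of a t "x - (t + 1) * a"] by simp
    then show ?thesis by (metis rangeI)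
  qed
qed

lemma enumerate_staircase:
  assumes "2 * t < a"
  shows "enumerate (staircase a t) n = staircase_enum a t n"
  by (rule enumerate_eq_strict_mono[OF strict_mono_staircase_enum[OF assms] range_staircase_enum])

lemma staircase_enum_Suc_mod3:
  assumes "a mod 3 = 2" "n mod 3 \<noteq> 0"
  shows "staircase_enum a t (Suc n) mod 3 = Suc (staircase_enum a t n) mod 3"
  using staircase_enum_Suc[of a t n]
proof
  assume "\<exists>i\<le>t. Suc n = (Suc i)\<^sup>2 \<and> staircase_enum a t n = i * a + 2 * i \<and>
            staircase_enum a t (Suc n) = Suc i * a"
  then obtain i where i: "Suc n = (Suc i)\<^sup>2" "staircase_enum a t n = i * a + 2 * i"
      "staircase_enum a t (Suc n) = Suc i * a" by blast
  define q where "q = i div 3"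
  have "i mod 3 = 2"
  proof (rule ccontr)
    assume "i mod 3 \<noteq> 2"
    then have "i = 3 * q \<or> i = 3 * q + 1" unfolding q_def by presburger
    then have "n = 3 * (3 * q * q + 2 * q) \<or> n = 3 * (3 * q * q + 4 * q + 1)"
      using i(1) by (auto simp: power2_eq_square algebra_simps)
    then show False using assms(2) by auto
  qed
  then have q: "i = 3 * q + 2" unfolding q_def by presburger
  define m where "m = a div 3"
  have m: "a = 3 * m + 2" unfolding m_def using assms(1) by presburger
  have "Suc (i * a + 2 * i) = 3 * (3 * q * m + 4 * q + 2 * m + 3)" "Suc i * a = 3 * ((q + 1) * a)"
    using q m by (simp_all add: algebra_simps)
  then show ?thesis using i by simp
qed simp

lemma bij_betw_mod3_of_consecutive:
  fixes g :: "nat \<Rightarrow> nat"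
  assumes "g 2 mod 3 = Suc (g 1) mod 3" "g 3 mod 3 = Suc (g 2) mod 3"
  shows "bij_betw (\<lambda>j. g j mod 3) {1..3} {..<3}"
proof -
  have domain: "{1..3::nat} = {1, 2, 3}" and range: "{..<3::nat} = {0, 1, 2}" by auto
  have "g 1 mod 3 = 0 \<or> g 1 mod 3 = 1 \<or> g 1 mod 3 = 2" by linarith
  moreover have "g 2 mod 3 = Suc (g 1 mod 3) mod 3" using assms(1) by (simp add: mod_Suc_eq)
  moreover have "g 3 mod 3 = Suc (g 2 mod 3) mod 3" using assms(2) by (simp add: mod_Suc_eq)
  ultimately show ?thesis unfolding domain range bij_betw_def inj_on_def by auto
qed

lemma perm_numerical_semigroup_staircase:
  assumes "a mod 3 = 2" "2 * t < a" "a \<le> 2 * t + 3" "1 \<le> t"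
  shows "perm_numerical_semigroup 3 (staircase a t)"
proof -
  let ?H = "staircase a t" and ?g = "staircase_enum a t"
  have enum: "enumerate ?H = ?g"
    using enumerate_staircase[OF assms(2)] by blast
  have "?g 1 = a" "?g 2 = a + 1" "?g 3 = a + 2"
    using assms(4) staircase_enum_square_plus[of 1 t 0 a] staircase_enum_square_plus[of 1 t 1 a]
      staircase_enum_square_plus[of 1 t 2 a] by (simp_all add: numeral_2_eq_2 numeral_3_eq_3)
  moreover have "{i::nat. 1 \<le> i \<and> i \<le> 3} = {1, 2, 3}" by auto
  then have "{enumerate ?H i | i. 1 \<le> i \<and> i \<le> 3} = ?g ` {1, 2, 3}"
    unfolding enum by blast
  ultimately have "{enumerate ?H i | i. 1 \<le> i \<and> i \<le> 3} = {a, a + 1, a + 2}"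
    by simp
  then have generated: "?H = gen_monoid {enumerate ?H i | i. 1 \<le> i \<and> i \<le> 3}"
    using gen_monoid_consecutive_eq_staircase[OF assms(3)] by simp
  have residues: "bij_betw (\<lambda>j. enumerate ?H (m * 3 + j) mod 3) {1..3} {..<3}" for m
  proof -
    have index: "m * 3 + 2 = Suc (m * 3 + 1)" "m * 3 + 3 = Suc (Suc (m * 3 + 1))" by simp_all
    have "?g (m * 3 + 2) mod 3 = Suc (?g (m * 3 + 1)) mod 3"
      "?g (m * 3 + 3) mod 3 = Suc (?g (m * 3 + 2)) mod 3"
      unfolding index by (intro staircase_enum_Suc_mod3[OF assms(1)]; presburger)+
    from bij_betw_mod3_of_consecutive[of "\<lambda>j. ?g (m * 3 + j)", OF this]
    show ?thesis unfolding enum .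
  qed
  have submonoid: "submonoid_nat ?H"
    by (subst generated) (rule submonoid_nat_gen_monoid)
  show ?thesis
    unfolding perm_numerical_semigroup_def numerical_semigroup_def
    by (intro conjI allI submonoid finite_compl_staircase generated residues)
qed

theorem lemma4p7:
  fixes k :: nat
  assumes "k > 0"
  defines "a \<equiv> 3 * k + 2"
  defines "S \<equiv> {a, a + 1, a + 2}"
  defines "G \<equiv> gen_monoid S"
  defines "t \<equiv> (3 * k) div 2"
  defines "I \<equiv> (\<lambda>i::nat. {i * a .. i * a + 2 * i})"
  defines "H \<equiv> (\<Union>i\<in>{0..t}. I i) \<union> {(t + 1) * a ..}"
  shows "G = H \<and>
         (\<forall>i\<in>{0..t}. set_less (I i) (I (i + 1))) \<and> set_less (I t) {(t + 1) * a ..} \<and>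
         perm_numerical_semigroup 3 H"
proof -
  have H: "H = staircase a t" unfolding H_def I_def staircase_def ..
  have bounds: "a mod 3 = 2" "2 * t < a" "a \<le> 2 * t + 3" "1 \<le> t"
    unfolding a_def t_def using assms(1) by presburger+
  have below_next: "set_less (I i) {(i + 1) * a ..}" if "i \<le> t" for i
    using staircase_step_less[OF bounds(2) that] unfolding set_less_def I_def by auto
  have "set_less (I i) (I (i + 1))" if "i \<le> t" for i
    using below_next[OF that] unfolding set_less_def I_def by auto
  moreover have "G = H"
    unfolding G_def S_def H using gen_monoid_consecutive_eq_staircase[OF bounds(3)] .
  moreover have "perm_numerical_semigroup 3 H"
    unfolding H using perm_numerical_semigroup_staircase[OF bounds] .
  ultimately show ?thesis
    using below_next[of t] by simp
qed

end
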